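(* Let $M$ be a non-reduced $n\times n$ matrix with natural number entries. Then there is a reduced submatrix $N$ of $M$ such that $\mathrm{Cat}(M)\neq\emptyset$ if and only if $\mathrm{Cat}(N)\neq\emptyset$.
   Context: For an $n\times n$ matrix $M=(m_{ij})$ with entries in the natural numbers, $\mathrm{Cat}(M)$ denotes the collection of categories $A$ with exactly $n$ distinct objects $x_1,\dots,x_n$ such that $|A(x_i,x_j)|=m_{ij}$ for all $i,j$, where $A(x_i,x_j)$ is the set of morphisms from $x_i$ to $x_j$. A matrix $M$ is called non-reduced if there exist $i\neq j$ such that $M_{ki}=M_{kj}$ and $M_{ik}=M_{jk}$ for all $k$ (i.e. row $i$ equals row $j$ and column $i$ equals column $j$); it is called reduced otherwise. A submatrix of $M$ means the matrix obtained by keeping the same subset of indices for rows and for columns, i.e. $(M_{st})_{s,t\in S}$ for some subset $S\subseteq\{1,\dots,n\}$. *)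

theory Defs
  imports Main
begin

text \<open>An n x n matrix with natural number entries is a function M :: nat => nat => nat,
  of which only the entries M i j with i, j < n matter. Objects of a category in Cat(M)
  are named 0, ..., n-1 (so x_i is object i), and the hom-set A(i,j) is identified with
  {0..<M i j} (any set of that cardinality can be relabelled).  A category structure is
  given by identities idm i and compositions cmp i j k g f (= g o f : i -> k for
  f : i -> j, g : j -> k).\<close>

definition is_cat_struct ::
  "nat \<Rightarrow> (nat \<Rightarrow> nat \<Rightarrow> nat) \<Rightarrow> (nat \<Rightarrow> nat)
     \<Rightarrow> (nat \<Rightarrow> nat \<Rightarrow> nat \<Rightarrow> nat \<Rightarrow> nat \<Rightarrow> nat) \<Rightarrow> bool" where
  "is_cat_struct n M idm cmp \<longleftrightarrow>
     (\<forall>i<n. idm i < M i i) \<and>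
     (\<forall>i<n. \<forall>j<n. \<forall>k<n. \<forall>f<M i j. \<forall>g<M j k. cmp i j k g f < M i k) \<and>
     (\<forall>i<n. \<forall>j<n. \<forall>f<M i j. cmp i j j (idm j) f = f \<and> cmp i i j f (idm i) = f) \<and>
     (\<forall>i<n. \<forall>j<n. \<forall>k<n. \<forall>l<n. \<forall>f<M i j. \<forall>g<M j k. \<forall>h<M k l.
        cmp i k l h (cmp i j k g f) = cmp i j l (cmp j k l h g) f)"

definition Cat_nonempty :: "nat \<Rightarrow> (nat \<Rightarrow> nat \<Rightarrow> nat) \<Rightarrow> bool" where
  "Cat_nonempty n M \<longleftrightarrow> (\<exists>idm cmp. is_cat_struct n M idm cmp)"

definition non_reduced :: "nat \<Rightarrow> (nat \<Rightarrow> nat \<Rightarrow> nat) \<Rightarrow> bool" where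
  "non_reduced n M \<longleftrightarrow>
     (\<exists>i<n. \<exists>j<n. i \<noteq> j \<and> (\<forall>k<n. M k i = M k j \<and> M i k = M j k))"

definition reduced :: "nat \<Rightarrow> (nat \<Rightarrow> nat \<Rightarrow> nat) \<Rightarrow> bool" where
  "reduced n M \<longleftrightarrow> \<not> non_reduced n M"

definition is_submatrix ::
  "nat \<Rightarrow> (nat \<Rightarrow> nat \<Rightarrow> nat) \<Rightarrow> nat \<Rightarrow> (nat \<Rightarrow> nat \<Rightarrow> nat) \<Rightarrow> bool" where
  "is_submatrix k N n M \<longleftrightarrow>
     (\<exists>f. strict_mono_on {0..<k} f \<and> f ` {0..<k} \<subseteq> {0..<n} \<and>
          (\<forall>i<k. \<forall>j<k. N i j = M (f i) (f j)))"

end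

theory Submission
  imports Defs
begin

text \<open>Call two indices twins when their rows and their columns agree. Pulling a category
  structure back along a map of indices that preserves the matrix entries again gives a category
  structure, so Cat(M) and Cat(N) are simultaneously empty whenever each of M and N is such a
  pullback of the other. Taking N to be the submatrix on the least index of every twin class,
  both the inclusion of the representatives and the map sending an index to its representative
  preserve entries; and N is reduced, since twins in N are twins in M, hence are equal
  representatives.\<close>

lemma Cat_nonempty_pullback:
  assumes g: "\<forall>a<n. g a < k" and M_eq: "\<forall>a<n. \<forall>b<n. M a b = N (g a) (g b)"
    and "Cat_nonempty k N"
  shows "Cat_nonempty n M"
proof -
  obtain idm cmp where N_cat: "is_cat_struct k N idm cmp"
    using \<open>Cat_nonempty k N\<close> unfolding Cat_nonempty_def by blast
  have "is_cat_struct n M (\<lambda>a. idm (g a)) (\<lambda>a b c. cmp (g a) (g b) (g c))"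
    using N_cat g M_eq unfolding is_cat_struct_def by simp
  then show ?thesis unfolding Cat_nonempty_def by blast
qed

definition twins :: "nat \<Rightarrow> (nat \<Rightarrow> nat \<Rightarrow> nat) \<Rightarrow> nat \<Rightarrow> nat \<Rightarrow> bool" where
  "twins n M a b \<longleftrightarrow> (\<forall>l<n. M l a = M l b \<and> M a l = M b l)"

lemma non_reduced_iff_twins:
  "non_reduced n M \<longleftrightarrow> (\<exists>i<n. \<exists>j<n. i \<noteq> j \<and> twins n M i j)"
  unfolding non_reduced_def twins_def by blast

lemma twins_sym: "twins n M a b \<Longrightarrow> twins n M b a"
  unfolding twins_def by simp

lemma twins_trans: "twins n M a b \<Longrightarrow> twins n M b c \<Longrightarrow> twins n M a c"
  unfolding twins_def by simp

definition twin_rep :: "nat \<Rightarrow> (nat \<Rightarrow> nat \<Rightarrow> nat) \<Rightarrow> nat \<Rightarrow> nat" where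
  "twin_rep n M a = (LEAST b. twins n M b a)"

definition twin_reps :: "nat \<Rightarrow> (nat \<Rightarrow> nat \<Rightarrow> nat) \<Rightarrow> nat set" where
  "twin_reps n M = {a. a < n \<and> twin_rep n M a = a}"

lemma twin_reps_finite: "finite (twin_reps n M)"
  unfolding twin_reps_def by simp

lemma twin_rep_le: "twin_rep n M a \<le> a"
  unfolding twin_rep_def using Least_le[of "\<lambda>b. twins n M b a" a] by (simp add: twins_def)

lemma twins_twin_rep: "twins n M (twin_rep n M a) a"
  unfolding twin_rep_def by (rule LeastI[of "\<lambda>b. twins n M b a" a]) (simp add: twins_def)

lemma twin_rep_eq: "twins n M a b \<Longrightarrow> twin_rep n M a = twin_rep n M b"
  unfolding twin_rep_def by (metis twins_sym twins_trans)

lemma twin_rep_idem: "twin_rep n M (twin_rep n M a) = twin_rep n M a"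
  by (rule twin_rep_eq) (rule twins_twin_rep)

lemma twin_rep_in_twin_reps: "a < n \<Longrightarrow> twin_rep n M a \<in> twin_reps n M"
  unfolding twin_reps_def using twin_rep_le[of n M a] twin_rep_idem by fastforce

lemma twin_reps_eq: "a \<in> twin_reps n M \<Longrightarrow> b \<in> twin_reps n M \<Longrightarrow> twins n M a b \<Longrightarrow> a = b"
  unfolding twin_reps_def by (metis (mono_tags) mem_Collect_eq twin_rep_eq)

lemma entry_twin_rep:
  assumes "a < n" "b < n"
  shows "M a b = M (twin_rep n M a) (twin_rep n M b)"
proof -
  have "twin_rep n M a < n" using twin_rep_le[of n M a] \<open>a < n\<close> by simp
  then show ?thesis
    using twins_twin_rep[of n M a] twins_twin_rep[of n M b] assms unfolding twins_def by simp
qed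

lemma sorted_list_of_set_enumerates:
  fixes S :: "'a::linorder set"
  assumes "finite S"
  defines "f \<equiv> \<lambda>i. sorted_list_of_set S ! i"
  shows "strict_mono_on {0..<card S} f" and "f ` {0..<card S} = S"
proof -
  have sorted: "sorted_wrt (<) (sorted_list_of_set S)"
    using strict_sorted_list_of_set by blast
  show "strict_mono_on {0..<card S} f"
    unfolding strict_mono_on_def f_def
    using sorted sorted_wrt_nth_less \<open>finite S\<close> by fastforce
  show "f ` {0..<card S} = S"
    unfolding f_def using \<open>finite S\<close> nth_image[of "card S" "sorted_list_of_set S"] by simp
qed

lemma Cat_nonempty_retract:
  assumes f: "\<forall>i<k. f i < n" and g: "\<forall>a<n. g a < k"
    and M_factors: "\<forall>a<n. \<forall>b<n. M a b = M (f (g a)) (f (g b))"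
  shows "Cat_nonempty n M \<longleftrightarrow> Cat_nonempty k (\<lambda>i j. M (f i) (f j))"
proof
  assume "Cat_nonempty n M"
  then show "Cat_nonempty k (\<lambda>i j. M (f i) (f j))"
    by (rule Cat_nonempty_pullback[rotated 2]) (use f in auto)
next
  assume "Cat_nonempty k (\<lambda>i j. M (f i) (f j))"
  then show "Cat_nonempty n M"
    by (rule Cat_nonempty_pullback[rotated 2]) (use g M_factors in auto)
qed

lemma reduced_retract:
  assumes f: "\<forall>i<k. f i < n" and g: "\<forall>a<n. g a < k" and gf: "\<forall>i<k. g (f i) = i"
    and M_factors: "\<forall>a<n. \<forall>b<n. M a b = M (f (g a)) (f (g b))"
    and twin_free: "\<forall>i<k. \<forall>j<k. twins n M (f i) (f j) \<longrightarrow> i = j"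
  shows "reduced k (\<lambda>i j. M (f i) (f j))"
  unfolding reduced_def non_reduced_iff_twins
proof clarify
  fix i j assume ij: "i < k" "j < k" "i \<noteq> j" and N_twins: "twins k (\<lambda>i j. M (f i) (f j)) i j"
  have "twins n M (f i) (f j)"
    unfolding twins_def
  proof (intro allI impI)
    fix l assume "l < n"
    then have "M l (f i) = M (f (g l)) (f i) \<and> M (f i) l = M (f i) (f (g l))"
      and "M l (f j) = M (f (g l)) (f j) \<and> M (f j) l = M (f j) (f (g l))"
      using M_factors f gf ij by (metis (no_types))+
    then show "M l (f i) = M l (f j) \<and> M (f i) l = M (f j) l"
      using N_twins g \<open>l < n\<close> unfolding twins_def by simp
  qed
  then show False using twin_free ij by blast
qed

lemma twin_reps_retract:
  obtains k :: nat and f g where "strict_mono_on {0..<k} f" "f ` {0..<k} = twin_reps n M"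
    "\<forall>a<n. g a < k" "\<forall>i<k. g (f i) = i" "\<forall>a<n. f (g a) = twin_rep n M a"
proof
  let ?k = "card (twin_reps n M)" and ?f = "\<lambda>i. sorted_list_of_set (twin_reps n M) ! i"
  let ?g = "\<lambda>a. the_inv_into {0..<?k} ?f (twin_rep n M a)"
  show mono: "strict_mono_on {0..<?k} ?f" and image: "?f ` {0..<?k} = twin_reps n M"
    by (rule sorted_list_of_set_enumerates[OF twin_reps_finite])+
  have inj: "inj_on ?f {0..<?k}"
    using mono strict_mono_on_imp_inj_on by blast
  have rep_in_range: "twin_rep n M a \<in> ?f ` {0..<?k}" if "a < n" for a
    unfolding image using that by (rule twin_rep_in_twin_reps)
  show "\<forall>a<n. ?g a < ?k"
    using the_inv_into_into[OF inj rep_in_range order_refl] by simp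
  show "\<forall>a<n. ?f (?g a) = twin_rep n M a"
    using f_the_inv_into_f[OF inj rep_in_range] by simp
  show "\<forall>i<?k. ?g (?f i) = i"
  proof (intro allI impI)
    fix i assume "i < ?k"
    then have "?f i \<in> twin_reps n M"
      using image by auto
    then have "twin_rep n M (?f i) = ?f i"
      unfolding twin_reps_def by simp
    then show "?g (?f i) = i"
      using the_inv_into_f_f[OF inj] \<open>i < ?k\<close> by simp
  qed
qed

theorem mainTheorem7:
  fixes n :: nat and M :: "nat \<Rightarrow> nat \<Rightarrow> nat"
  assumes "non_reduced n M"
  shows "\<exists>k N. 1 \<le> k \<and> is_submatrix k N n M \<and> reduced k N \<and>
            (Cat_nonempty n M \<longleftrightarrow> Cat_nonempty k N)"
proof -
  obtain k :: nat and f g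
    where mono: "strict_mono_on {0..<k} f" and image: "f ` {0..<k} = twin_reps n M"
    and g: "\<forall>a<n. g a < k" and gf: "\<forall>i<k. g (f i) = i"
    and fg: "\<forall>a<n. f (g a) = twin_rep n M a"
    by (rule twin_reps_retract[of n M])
  have f: "\<forall>i<k. f i < n"
    using image unfolding twin_reps_def by fastforce
  have M_factors: "\<forall>a<n. \<forall>b<n. M a b = M (f (g a)) (f (g b))"
    using fg entry_twin_rep by simp
  have "\<forall>i<k. \<forall>j<k. twins n M (f i) (f j) \<longrightarrow> i = j"
    using image twin_reps_eq[of _ n M] strict_mono_on_imp_inj_on[OF mono]
    unfolding inj_on_def by (metis atLeastLessThan_iff imageI le0)
  then have "reduced k (\<lambda>i j. M (f i) (f j))"
    using reduced_retract f g gf M_factors by blast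
  moreover have "1 \<le> k"
    using assms g unfolding non_reduced_def by fastforce
  moreover have "is_submatrix k (\<lambda>i j. M (f i) (f j)) n M"
    unfolding is_submatrix_def using mono f by auto
  ultimately show ?thesis
    using Cat_nonempty_retract[OF f g M_factors] by blast
qed

end
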